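(* Let $A$ be a $3\times 3$ skew-symmetric integer matrix. Then $A$ passes the algorithm described in the context if and only if $A$ is mutation-cyclic.
   Context: Notation: $S(p,q,r)=\begin{pmatrix}0&-p&-r\\ p&0&-q\\ r&q&0\end{pmatrix}$ for integers $p,q,r$. Matrix mutation: $\mu_k(B)=(b'_{ij})$ with $b'_{ij}=-b_{ij}$ if $i=k$ or $j=k$, and $b'_{ij}=b_{ij}+\operatorname{sgn}(b_{ik})\max(b_{ik}b_{kj},0)$ otherwise. A column is sign-coherent if all its nonzero entries have the same sign. A $3\times3$ skew-symmetric matrix is acyclic if its quiver ($b_{ij}$ arrows $i\to j$ when $b_{ij}>0$) has no oriented cycle (equivalently, it has a sign-coherent column), and cyclic otherwise; it is mutation-cyclic if every matrix in its mutation class is cyclic. $B,C$ are essentially equivalent if for some permutation $\sigma$ of $\{1,2,3\}$, $C_{ij}=B_{\sigma(i)\sigma(j)}$ for all $i,j$ or $C_{ij}=-B_{\sigma(i)\sigma(j)}$ for all $i,j$. The standard form of $B$ is the first matrix in the list $S(-a,-b,c),S(-a,b,c),S(a,-b,c),S(a,b,c)$ ($a\ge b\ge c\ge0$) essentially equivalent to $B$. Algorithm: replace the input by its standard form, written $S(-a,-b,c)$ with $|a|\ge|b|\ge|c|\ge0$, and set $A_1$ equal to it. Step 1: if $a\ge b\ge c\ge 2$ and $bc-a\ge b$, the input passes; otherwise, if some column is sign-coherent or $c\le 2$, it fails. Step 2 (for the current $A_i$): if some matrix essentially equivalent to $\mu_3(A_i)$ has the form $S(-d,-e,f)$ with $d\ge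 e\ge f\ge 2$, let $A_{i+1}$ be such a matrix; otherwise the input fails. Then: if $f\ge 3$ and $ef-d\ge e$, it passes; if $f=2$ it passes if $d=e$ and fails if $d>e$; otherwise increase $i$ by one and repeat Step 2. *)

theory Defs
  imports Main
begin

text \<open>A 3x3 integer matrix is represented as a function nat => nat => int,
  indices 1,2,3, with all entries outside {1,2,3} x {1,2,3} equal to 0.\<close>

type_synonym mat3 = "nat \<Rightarrow> nat \<Rightarrow> int"

definition idx3 :: "nat set" where "idx3 = {1,2,3}"

definition skew3 :: "mat3 \<Rightarrow> bool" where
  "skew3 B \<longleftrightarrow> (\<forall>i j. B i j = - B j i) \<and> (\<forall>i j. (i \<notin> idx3 \<or> j \<notin> idx3) \<longrightarrow> B i j = 0)"

definition S :: "int \<Rightarrow> int \<Rightarrow> int \<Rightarrow> mat3" where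
  "S p q r = (\<lambda>i j.
     if i = 1 \<and> j = 2 then - p else
     if i = 1 \<and> j = 3 then - r else
     if i = 2 \<and> j = 1 then p else
     if i = 2 \<and> j = 3 then - q else
     if i = 3 \<and> j = 1 then r else
     if i = 3 \<and> j = 2 then q else 0)"

definition mu :: "nat \<Rightarrow> mat3 \<Rightarrow> mat3" where
  "mu k B = (\<lambda>i j. if i = k \<or> j = k then - B i j
                   else B i j + sgn (B i k) * max (B i k * B k j) 0)"

definition sign_coherent_col :: "mat3 \<Rightarrow> nat \<Rightarrow> bool" where
  "sign_coherent_col B j \<longleftrightarrow> (\<forall>i\<in>idx3. B i j \<ge> 0) \<or> (\<forall>i\<in>idx3. B i j \<le> 0)"

definition quiver_rel :: "mat3 \<Rightarrow> (nat \<times> nat) set" where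
  "quiver_rel B = {(i, j). i \<in> idx3 \<and> j \<in> idx3 \<and> B i j > 0}"

definition acyclic_mat :: "mat3 \<Rightarrow> bool" where
  "acyclic_mat B \<longleftrightarrow> acyclic (quiver_rel B)"

definition cyclic_mat :: "mat3 \<Rightarrow> bool" where
  "cyclic_mat B \<longleftrightarrow> \<not> acyclic_mat B"

definition mutation_step :: "mat3 \<Rightarrow> mat3 \<Rightarrow> bool" where
  "mutation_step B C \<longleftrightarrow> (\<exists>k\<in>idx3. C = mu k B)"

definition mutation_cyclic :: "mat3 \<Rightarrow> bool" where
  "mutation_cyclic B \<longleftrightarrow> (\<forall>C. mutation_step\<^sup>*\<^sup>* B C \<longrightarrow> cyclic_mat C)"

definition ess_equiv :: "mat3 \<Rightarrow> mat3 \<Rightarrow> bool" where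
  "ess_equiv B C \<longleftrightarrow> (\<exists>\<sigma>. bij_betw \<sigma> idx3 idx3 \<and>
      ((\<forall>i\<in>idx3. \<forall>j\<in>idx3. C i j = B (\<sigma> i) (\<sigma> j)) \<or>
       (\<forall>i\<in>idx3. \<forall>j\<in>idx3. C i j = - B (\<sigma> i) (\<sigma> j))))"

text \<open>The four candidate forms, in the order of the list
  S(-a,-b,c), S(-a,b,c), S(a,-b,c), S(a,b,c).\<close>
fun form :: "nat \<Rightarrow> int \<Rightarrow> int \<Rightarrow> int \<Rightarrow> mat3" where
  "form 0 a b c = S (-a) (-b) c"
| "form (Suc 0) a b c = S (-a) b c"
| "form (Suc (Suc 0)) a b c = S a (-b) c"
| "form _ a b c = S a b c"

definition has_form :: "mat3 \<Rightarrow> nat \<Rightarrow> bool" where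
  "has_form B t \<longleftrightarrow> (\<exists>a b c. a \<ge> b \<and> b \<ge> c \<and> c \<ge> 0 \<and> ess_equiv B (form t a b c))"

definition std_form :: "mat3 \<Rightarrow> mat3" where
  "std_form B = (SOME M. \<exists>t a b c. t < 4 \<and> a \<ge> b \<and> b \<ge> c \<and> c \<ge> 0 \<and>
       M = form t a b c \<and> ess_equiv B M \<and> (\<forall>t'<t. \<not> has_form B t'))"

text \<open>Step 2 of the algorithm, iterated; the input passes iff the iteration
  terminates with "pass" after finitely many steps.\<close>
inductive step2_passes :: "mat3 \<Rightarrow> bool" where
  "\<lbrakk> d \<ge> e; e \<ge> f; f \<ge> 2; ess_equiv (mu 3 M) (S (-d) (-e) f);
     (f \<ge> 3 \<and> e * f - d \<ge> e) \<or> (f = 2 \<and> d = e) \<or>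
     (f \<ge> 3 \<and> e * f - d < e \<and> step2_passes (S (-d) (-e) f)) \<rbrakk>
   \<Longrightarrow> step2_passes M"

text \<open>The standard form is written S(-a,-b,c); then a = M 1 2, b = M 2 3, c = M 3 1.\<close>
definition passes :: "mat3 \<Rightarrow> bool" where
  "passes A \<longleftrightarrow> (let M = std_form A; a = M 1 2; b = M 2 3; c = M 3 1 in
     (a \<ge> b \<and> b \<ge> c \<and> c \<ge> 2 \<and> b * c - a \<ge> b) \<or>
     (\<not> (\<exists>j\<in>idx3. sign_coherent_col M j) \<and> \<not> c \<le> 2 \<and> step2_passes M))"

end

theory Submission
  imports Defs
begin

text \<open>Write a skew-symmetric matrix as \<open>skewm x y z\<close>, with entries
  \<open>b\<^sub>1\<^sub>2 = x, b\<^sub>2\<^sub>3 = y, b\<^sub>3\<^sub>1 = z\<close>. Its quiver is cyclic iff \<open>x, y, z\<close> are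
  nonzero of one sign, and on a cyclic matrix a mutation replaces one entry, say \<open>x\<close>,
  by \<open>yz - x\<close> and negates the matrix. This is the Vieta involution of the Markov-type
  form \<open>C(x,y,z) = x\<^sup>2 + y\<^sup>2 + z\<^sup>2 - xyz\<close>, so cyclic matrices with all
  \<open>|b\<^sub>i\<^sub>j| \<ge> 2\<close> and \<open>C \<le> 4\<close> stay in this class under mutation. Outside it,
  mutating at the largest entry either produces an acyclic matrix or strictly decreases the
  entries without entering the class, so an acyclic matrix is reached. The tests of the
  algorithm decide exactly this criterion: \<open>bc - a \<ge> b\<close> forces \<open>C \<le> 4\<close>, and Step 2
  follows the decreasing mutation sequence.\<close>

definition skewm :: "int \<Rightarrow> int \<Rightarrow> int \<Rightarrow> mat3" where
  "skewm x y z = S (-x) (-y) z"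

lemma skewm_apply [simp]:
  "skewm x y z 1 2 = x" "skewm x y z 2 3 = y" "skewm x y z 3 1 = z"
  "skewm x y z 2 1 = -x" "skewm x y z 3 2 = -y" "skewm x y z 1 3 = -z"
  "skewm x y z 1 1 = 0" "skewm x y z 2 2 = 0" "skewm x y z 3 3 = 0"
  by (simp_all add: skewm_def S_def)

(* Unfolding idx3 presents the index 1 as Suc 0. *)
lemma skewm_apply_Suc_0 [simp]:
  "skewm x y z (Suc 0) 2 = x" "skewm x y z 3 (Suc 0) = z" "skewm x y z 2 (Suc 0) = -x"
  "skewm x y z (Suc 0) 3 = -z" "skewm x y z (Suc 0) (Suc 0) = 0"
  by (simp_all add: skewm_def S_def)

lemma skewm_outside: "i \<notin> idx3 \<or> j \<notin> idx3 \<Longrightarrow> skewm x y z i j = 0"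
  by (auto simp: skewm_def S_def idx3_def)

lemma skew3_skewm: "skew3 (skewm x y z)"
proof -
  have "skewm x y z i j = - skewm x y z j i" for i j
    using skewm_outside[of i j] skewm_outside[of j i]
    by (cases "i \<in> idx3 \<and> j \<in> idx3") (auto simp: idx3_def)
  then show ?thesis
    unfolding skew3_def using skewm_outside by blast
qed

lemma skew3_eq_skewm:
  assumes "skew3 B"
  shows "B = skewm (B 1 2) (B 2 3) (B 3 1)"
proof (intro ext)
  fix i j
  have anti: "B j i = - B i j" and outside: "i \<notin> idx3 \<or> j \<notin> idx3 \<Longrightarrow> B i j = 0" for i j
    using assms unfolding skew3_def by blast+
  have diag: "B k k = 0" for k
    using anti[of k k] by simp
  show "B i j = skewm (B 1 2) (B 2 3) (B 3 1) i j"
  proof (cases "i \<in> idx3 \<and> j \<in> idx3")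
    case True
    then show ?thesis
      using anti[of 1 2] anti[of 2 3] anti[of 3 1] diag by (auto simp: idx3_def)
  next
    case False
    then show ?thesis
      using outside skewm_outside by simp
  qed
qed

lemma max_mult_0_if_sgn_ne: "sgn (a::int) \<noteq> sgn b \<Longrightarrow> max (a * b) 0 = 0"
  by (cases a "0::int" rule: linorder_cases; cases b "0::int" rule: linorder_cases)
     (auto simp: max_def mult_le_0_iff)

lemma mu_skewm:
  "mu 1 (skewm x y z) = skewm (-x) (y - sgn x * max (x * z) 0) (-z)"
  "mu 2 (skewm x y z) = skewm (-x) (-y) (z - sgn y * max (x * y) 0)"
  "mu 3 (skewm x y z) = skewm (x - sgn z * max (y * z) 0) (-y) (-z)"
  by (auto simp: fun_eq_iff mu_def skewm_def S_def max_mult_0_if_sgn_ne algebra_simps)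

definition cyclic_triple :: "int \<Rightarrow> int \<Rightarrow> int \<Rightarrow> bool" where
  "cyclic_triple x y z \<longleftrightarrow> (x > 0 \<and> y > 0 \<and> z > 0) \<or> (x < 0 \<and> y < 0 \<and> z < 0)"

lemma cyclic_triple_rotate: "cyclic_triple x y z \<longleftrightarrow> cyclic_triple y z x"
  and cyclic_triple_swap: "cyclic_triple x y z \<longleftrightarrow> cyclic_triple x z y"
  and cyclic_triple_neg: "cyclic_triple (-x) (-y) (-z) \<longleftrightarrow> cyclic_triple x y z"
  by (auto simp: cyclic_triple_def)

lemma acyclic_skewm_if_rank:
  fixes f :: "nat \<Rightarrow> nat"
  assumes "\<And>i j. i \<in> idx3 \<Longrightarrow> j \<in> idx3 \<Longrightarrow> skewm x y z i j > 0 \<Longrightarrow> f i < f j"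
  shows "acyclic (quiver_rel (skewm x y z))"
proof -
  have "wf {(i, j). f i < f j}"
    using wf_inv_image[OF wf_less_than, of f] by (simp add: inv_image_def)
  moreover have "quiver_rel (skewm x y z) \<subseteq> {(i, j). f i < f j}"
    using assms by (auto simp: quiver_rel_def)
  ultimately show ?thesis
    using acyclic_subset wf_acyclic by blast
qed

lemma cyclic_mat_skewm_iff: "cyclic_mat (skewm x y z) \<longleftrightarrow> cyclic_triple x y z"
proof
  let ?r = "quiver_rel (skewm x y z)"
  show "cyclic_triple x y z" if "cyclic_mat (skewm x y z)"
  proof (rule ccontr)
    assume "\<not> cyclic_triple x y z"
    then consider "x \<ge> 0" "y \<ge> 0" "z \<le> 0" | "y \<ge> 0" "z \<ge> 0" "x \<le> 0"
      | "z \<ge> 0" "x \<ge> 0" "y \<le> 0" | "x \<le> 0" "y \<le> 0" "z \<ge> 0"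
      | "y \<le> 0" "z \<le> 0" "x \<ge> 0" | "z \<le> 0" "x \<le> 0" "y \<ge> 0"
      unfolding cyclic_triple_def by linarith
    then have "acyclic ?r"
    proof cases
      case 1
      show ?thesis
        by (rule acyclic_skewm_if_rank[of _ _ _ "nth [0, 0, 1, 2]"]) (use 1 in \<open>auto simp: idx3_def\<close>)
    next
      case 2
      show ?thesis
        by (rule acyclic_skewm_if_rank[of _ _ _ "nth [0, 2, 0, 1]"]) (use 2 in \<open>auto simp: idx3_def\<close>)
    next
      case 3
      show ?thesis
        by (rule acyclic_skewm_if_rank[of _ _ _ "nth [0, 1, 2, 0]"]) (use 3 in \<open>auto simp: idx3_def\<close>)
    next
      case 4
      show ?thesis
        by (rule acyclic_skewm_if_rank[of _ _ _ "nth [0, 2, 1, 0]"]) (use 4 in \<open>auto simp: idx3_def\<close>)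
    next
      case 5
      show ?thesis
        by (rule acyclic_skewm_if_rank[of _ _ _ "nth [0, 0, 2, 1]"]) (use 5 in \<open>auto simp: idx3_def\<close>)
    next
      case 6
      show ?thesis
        by (rule acyclic_skewm_if_rank[of _ _ _ "nth [0, 1, 0, 2]"]) (use 6 in \<open>auto simp: idx3_def\<close>)
    qed
    with that show False
      by (simp add: cyclic_mat_def acyclic_mat_def)
  qed
  show "cyclic_mat (skewm x y z)" if "cyclic_triple x y z"
  proof -
    have "(1, 2) \<in> ?r \<and> (2, 3) \<in> ?r \<and> (3, 1) \<in> ?r \<or>
        (1, 3) \<in> ?r \<and> (3, 2) \<in> ?r \<and> (2, 1) \<in> ?r"
      using that by (auto simp: quiver_rel_def idx3_def cyclic_triple_def)
    then have "(1, 1) \<in> ?r\<^sup>+"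
      by (meson trancl.r_into_trancl trancl_into_trancl)
    then show ?thesis
      by (auto simp: cyclic_mat_def acyclic_mat_def acyclic_def)
  qed
qed

lemma no_sign_coherent_col_skewm_iff:
  "\<not> (\<exists>j\<in>idx3. sign_coherent_col (skewm x y z) j) \<longleftrightarrow> cyclic_triple x y z"
proof -
  have "(\<exists>j\<in>idx3. sign_coherent_col (skewm x y z) j) \<longleftrightarrow>
      sign_coherent_col (skewm x y z) 1 \<or> sign_coherent_col (skewm x y z) 2 \<or>
      sign_coherent_col (skewm x y z) 3"
    by (simp add: idx3_def)
  then show ?thesis
    by (simp add: sign_coherent_col_def idx3_def cyclic_triple_def) linarith
qed

lemma mutation_step_skewm_iff:
  "mutation_step (skewm x y z) C \<longleftrightarrow>
     C = skewm (-x) (y - sgn x * max (x * z) 0) (-z) \<or>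
     C = skewm (-x) (-y) (z - sgn y * max (x * y) 0) \<or>
     C = skewm (x - sgn z * max (y * z) 0) (-y) (-z)"
proof -
  have "mutation_step B C \<longleftrightarrow> C = mu 1 B \<or> C = mu 2 B \<or> C = mu 3 B" for B
    unfolding mutation_step_def idx3_def by blast
  then show ?thesis
    by (simp only: mu_skewm)
qed

definition markov :: "int \<Rightarrow> int \<Rightarrow> int \<Rightarrow> int" where
  "markov a b c = a * a + b * b + c * c - a * b * c"

lemma markov_rotate: "markov a b c = markov b c a"
  and markov_swap: "markov a b c = markov a c b"
  and markov_vieta: "markov (b * c - a) b c = markov a b c"
  by (simp_all add: markov_def algebra_simps)

definition markov_cyclic :: "int \<Rightarrow> int \<Rightarrow> int \<Rightarrow> bool" where
  "markov_cyclic x y z \<longleftrightarrow>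
     cyclic_triple x y z \<and> \<bar>x\<bar> \<ge> 2 \<and> \<bar>y\<bar> \<ge> 2 \<and> \<bar>z\<bar> \<ge> 2 \<and>
     markov (\<bar>x\<bar>) (\<bar>y\<bar>) (\<bar>z\<bar>) \<le> 4"

lemma markov_cyclic_rotate: "markov_cyclic x y z \<longleftrightarrow> markov_cyclic y z x"
  and markov_cyclic_swap: "markov_cyclic x y z \<longleftrightarrow> markov_cyclic x z y"
  and markov_cyclic_neg: "markov_cyclic (-x) (-y) (-z) \<longleftrightarrow> markov_cyclic x y z"
  unfolding markov_cyclic_def
  using cyclic_triple_rotate cyclic_triple_swap cyclic_triple_neg markov_rotate markov_swap
  by auto

lemma markov_cyclic_pos_iff:
  "a > 0 \<Longrightarrow> b > 0 \<Longrightarrow> c > 0 \<Longrightarrow>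
     markov_cyclic a b c \<longleftrightarrow> a \<ge> 2 \<and> b \<ge> 2 \<and> c \<ge> 2 \<and> markov a b c \<le> 4"
  by (simp add: markov_cyclic_def cyclic_triple_def)

lemma vieta_ge_2:
  fixes a b c :: int
  assumes "a \<ge> 2" "b \<ge> 2" "c \<ge> 2" "markov a b c \<le> 4"
  shows "b * c - a \<ge> 2"
proof (rule ccontr)
  define t where "t = b * c - a"
  assume "\<not> b * c - a \<ge> 2"
  then have "t \<le> 1"
    by (simp add: t_def)
  have "markov t b c \<le> 4"
    using markov_vieta[of b c a] assms(4) by (simp add: t_def)
  then have markov_t: "t * t + b * b + c * c - t * b * c \<le> 4"
    by (simp add: markov_def)
  have "b * b \<ge> 4" "c * c \<ge> 4" "b * c \<ge> 4"
    using mult_mono[of 2 b 2 b] mult_mono[of 2 c 2 c] mult_mono[of 2 b 2 c] assms by simp_all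
  show False
  proof (cases "t \<le> 0")
    case True
    then have "t * (t - b * c) \<ge> 0"
      using \<open>b * c \<ge> 4\<close> by (intro mult_nonpos_nonpos) auto
    then show False
      using markov_t \<open>b * b \<ge> 4\<close> \<open>c * c \<ge> 4\<close> by (simp add: algebra_simps)
  next
    case False
    then have "t = 1"
      using \<open>t \<le> 1\<close> by simp
    moreover have "b * b + c * c \<ge> 2 * b * c"
      using zero_le_square[of "b - c"] by (simp add: algebra_simps)
    ultimately show False
      using markov_t \<open>b * c \<ge> 4\<close> by simp
  qed
qed

lemma markov_le_4_if_sorted:
  fixes a b c :: int
  assumes "a \<ge> b" "b \<ge> c" "c \<ge> 2" "b * c - a \<ge> b"
  shows "markov a b c \<le> 4"
proof -
  have "(a - b) * (b * c - a - b) \<ge> 0"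
    using assms by (intro mult_nonneg_nonneg) auto
  then have "a * (b * c - a) \<ge> b * b * (c - 1)"
    by (simp add: algebra_simps)
  moreover have "b * b * (c - 2) \<ge> c * c * (c - 2)"
    using assms by (intro mult_right_mono mult_mono) auto
  moreover have "c * c * (c - 3) \<ge> 0 \<or> c = 2"
    using assms by auto
  ultimately show ?thesis
    by (auto simp: markov_def algebra_simps)
qed

lemma markov_cyclic_vieta:
  assumes "markov_cyclic a b c" "a > 0"
  shows "markov_cyclic (b * c - a) b c"
proof -
  have "b > 0" "c > 0"
    using assms by (auto simp: markov_cyclic_def cyclic_triple_def)
  then show ?thesis
    using assms vieta_ge_2[of a b c] markov_vieta[of b c a] by (simp add: markov_cyclic_pos_iff)
qed

lemma markov_cyclic_mu3:
  assumes "markov_cyclic x y z"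
  shows "markov_cyclic (x - sgn z * max (y * z) 0) (-y) (-z)"
proof (cases "x > 0")
  case True
  then have "y > 0" "z > 0"
    using assms by (auto simp: markov_cyclic_def cyclic_triple_def)
  then have "x - sgn z * max (y * z) 0 = - (y * z - x)"
    by simp
  then show ?thesis
    using markov_cyclic_vieta[OF assms True] markov_cyclic_neg by metis
next
  case False
  then have neg: "-x > 0" "-y > 0" "-z > 0"
    using assms by (auto simp: markov_cyclic_def cyclic_triple_def)
  then have "x - sgn z * max (y * z) 0 = (-y) * (-z) - (-x)"
    by (simp add: mult_neg_neg)
  then show ?thesis
    using markov_cyclic_vieta[of "-x" "-y" "-z"] assms neg(1) markov_cyclic_neg by metis
qed

lemma markov_cyclic_mutation_step:
  assumes "markov_cyclic x y z" "mutation_step (skewm x y z) C"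
  obtains x' y' z' where "C = skewm x' y' z'" "markov_cyclic x' y' z'"
proof -
  have "markov_cyclic (y - sgn x * max (x * z) 0) (-z) (-x)"
    using markov_cyclic_mu3[of y z x] assms(1) markov_cyclic_rotate by (metis mult.commute)
  moreover have "markov_cyclic (z - sgn y * max (x * y) 0) (-x) (-y)"
    using markov_cyclic_mu3[of z x y] assms(1) markov_cyclic_rotate by metis
  ultimately show ?thesis
    using that assms markov_cyclic_mu3[of x y z] markov_cyclic_rotate
    unfolding mutation_step_skewm_iff by metis
qed

lemma mutation_cyclic_if_markov_cyclic:
  assumes "markov_cyclic x y z"
  shows "mutation_cyclic (skewm x y z)"
  unfolding mutation_cyclic_def
proof (intro allI impI)
  fix C
  assume "mutation_step\<^sup>*\<^sup>* (skewm x y z) C"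
  then have "\<exists>x' y' z'. C = skewm x' y' z' \<and> markov_cyclic x' y' z'"
  proof (induction rule: rtranclp_induct)
    case base
    then show ?case
      using assms by blast
  next
    case (step B C)
    then show ?case
      using markov_cyclic_mutation_step by metis
  qed
  then show "cyclic_mat C"
    using cyclic_mat_skewm_iff markov_cyclic_def by auto
qed

lemma markov_descent_pos:
  fixes a b c :: int
  assumes pos: "a > 0" "b > 0" "c > 0" and max: "a \<ge> b" "a \<ge> c"
    and not_markov: "\<not> markov_cyclic a b c" and flip: "b * c > a"
  shows "b * c - a < a" and "\<not> markov_cyclic (b * c - a) b c"
proof -
  have "b \<noteq> 1" "c \<noteq> 1"
    using flip max by auto
  then have "b \<ge> 2" "c \<ge> 2"
    using pos by auto
  then have markov_gt: "markov a b c > 4"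
    using not_markov pos max by (simp add: markov_cyclic_pos_iff)
  show "b * c - a < a"
  proof (rule ccontr)
    assume "\<not> b * c - a < a"
    then have "markov a (max b c) (min b c) \<le> 4"
      using max \<open>b \<ge> 2\<close> \<open>c \<ge> 2\<close>
      by (intro markov_le_4_if_sorted) (auto simp: max_def min_def mult.commute)
    then show False
      using markov_gt markov_swap[of a b c] by (auto simp: max_def min_def split: if_splits)
  qed
  show "\<not> markov_cyclic (b * c - a) b c"
    using markov_gt markov_vieta[of b c a] flip pos by (simp add: markov_cyclic_pos_iff)
qed

lemma markov_descent:
  assumes cyclic: "cyclic_triple x y z" and not_markov: "\<not> markov_cyclic x y z"
    and max: "\<bar>x\<bar> \<ge> \<bar>y\<bar>" "\<bar>x\<bar> \<ge> \<bar>z\<bar>"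
  defines "x' \<equiv> x - sgn z * max (y * z) 0"
  shows "\<not> cyclic_triple x' (-y) (-z) \<or> \<not> markov_cyclic x' (-y) (-z) \<and> \<bar>x'\<bar> < \<bar>x\<bar>"
proof (cases "x > 0")
  case True
  then have "y > 0" "z > 0"
    using cyclic by (auto simp: cyclic_triple_def)
  then have x': "x' = - (y * z - x)"
    by (simp add: x'_def)
  then have markov': "markov_cyclic x' (-y) (-z) \<longleftrightarrow> markov_cyclic (y * z - x) y z"
    using markov_cyclic_neg by presburger
  show ?thesis
  proof (cases "y * z \<le> x")
    case True
    then show ?thesis
      using x' \<open>y > 0\<close> by (simp add: cyclic_triple_def)
  next
    case False
    then show ?thesis
      using markov_descent_pos[of x y z] x' markov' True \<open>y > 0\<close> \<open>z > 0\<close> max not_markov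
      by auto
  qed
next
  case False
  then have neg: "-x > 0" "-y > 0" "-z > 0"
    using cyclic by (auto simp: cyclic_triple_def)
  then have x': "x' = (-y) * (-z) - (-x)"
    by (simp add: x'_def mult_neg_neg)
  show ?thesis
  proof (cases "(-y) * (-z) \<le> -x")
    case True
    then show ?thesis
      using x' neg by (simp add: cyclic_triple_def)
  next
    case False
    then show ?thesis
      using markov_descent_pos[of "-x" "-y" "-z"] x' neg max not_markov
        markov_cyclic_neg[of x y z]
      by auto
  qed
qed

lemma exists_descending_mutation:
  assumes "cyclic_triple x y z" "\<not> markov_cyclic x y z"
  obtains p q r where "mutation_step (skewm x y z) (skewm p q r)"
    "\<not> cyclic_triple p q r \<or> \<not> markov_cyclic p q r \<and> \<bar>p\<bar> + \<bar>q\<bar> + \<bar>r\<bar> < \<bar>x\<bar> + \<bar>y\<bar> + \<bar>z\<bar>"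
proof -
  consider "\<bar>x\<bar> \<ge> \<bar>y\<bar>" "\<bar>x\<bar> \<ge> \<bar>z\<bar>" | "\<bar>y\<bar> \<ge> \<bar>z\<bar>" "\<bar>y\<bar> \<ge> \<bar>x\<bar>"
    | "\<bar>z\<bar> \<ge> \<bar>x\<bar>" "\<bar>z\<bar> \<ge> \<bar>y\<bar>"
    by linarith
  then show ?thesis
  proof cases
    case 1
    then show ?thesis
      using that[of "x - sgn z * max (y * z) 0" "-y" "-z"] markov_descent[OF assms 1]
      by (auto simp: mutation_step_skewm_iff)
  next
    case 2
    have "cyclic_triple y z x" "\<not> markov_cyclic y z x"
      using assms cyclic_triple_rotate markov_cyclic_rotate by blast+
    from markov_descent[OF this 2] show ?thesis
      using that[of "-x" "y - sgn x * max (x * z) 0" "-z"]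
        cyclic_triple_rotate markov_cyclic_rotate
      by (auto simp: mutation_step_skewm_iff mult.commute[of z x])
  next
    case 3
    have "cyclic_triple z x y" "\<not> markov_cyclic z x y"
      using assms cyclic_triple_rotate markov_cyclic_rotate by blast+
    from markov_descent[OF this 3] show ?thesis
      using that[of "-x" "-y" "z - sgn y * max (x * y) 0"]
        cyclic_triple_rotate markov_cyclic_rotate
      by (auto simp: mutation_step_skewm_iff)
  qed
qed

lemma exists_acyclic_mutation:
  "\<not> markov_cyclic x y z \<Longrightarrow> \<exists>C. mutation_step\<^sup>*\<^sup>* (skewm x y z) C \<and> \<not> cyclic_mat C"
proof (induction "nat (\<bar>x\<bar> + \<bar>y\<bar> + \<bar>z\<bar>)" arbitrary: x y z rule: less_induct)
  case less
  show ?case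
  proof (cases "cyclic_triple x y z")
    case False
    then show ?thesis
      using cyclic_mat_skewm_iff by blast
  next
    case True
    then obtain p q r where step: "mutation_step (skewm x y z) (skewm p q r)"
      and descent: "\<not> cyclic_triple p q r \<or>
        \<not> markov_cyclic p q r \<and> \<bar>p\<bar> + \<bar>q\<bar> + \<bar>r\<bar> < \<bar>x\<bar> + \<bar>y\<bar> + \<bar>z\<bar>"
      using exists_descending_mutation less.prems by blast
    have "\<exists>C. mutation_step\<^sup>*\<^sup>* (skewm p q r) C \<and> \<not> cyclic_mat C"
      using descent
    proof
      assume "\<not> cyclic_triple p q r"
      then show ?thesis
        using cyclic_mat_skewm_iff by blast
    next
      assume "\<not> markov_cyclic p q r \<and> \<bar>p\<bar> + \<bar>q\<bar> + \<bar>r\<bar> < \<bar>x\<bar> + \<bar>y\<bar> + \<bar>z\<bar>"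
      moreover from this have "nat (\<bar>p\<bar> + \<bar>q\<bar> + \<bar>r\<bar>) < nat (\<bar>x\<bar> + \<bar>y\<bar> + \<bar>z\<bar>)"
        by (simp add: zless_nat_conj)
          (use abs_ge_zero[of p] abs_ge_zero[of q] abs_ge_zero[of r] in linarith)
      ultimately show ?thesis
        using less.hyps by blast
    qed
    then show ?thesis
      using step by (meson converse_rtranclp_into_rtranclp)
  qed
qed

lemma mutation_cyclic_skewm_iff: "mutation_cyclic (skewm x y z) \<longleftrightarrow> markov_cyclic x y z"
  using mutation_cyclic_if_markov_cyclic exists_acyclic_mutation
  unfolding mutation_cyclic_def by blast

lemma ess_equiv_refl: "ess_equiv B B"
  unfolding ess_equiv_def by (intro exI[of _ id]) auto

lemma ess_equiv_trans:
  assumes "ess_equiv A B" "ess_equiv B C"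
  shows "ess_equiv A C"
proof -
  obtain \<sigma> where \<sigma>: "bij_betw \<sigma> idx3 idx3"
    and AB: "(\<forall>i\<in>idx3. \<forall>j\<in>idx3. B i j = A (\<sigma> i) (\<sigma> j)) \<or>
      (\<forall>i\<in>idx3. \<forall>j\<in>idx3. B i j = - A (\<sigma> i) (\<sigma> j))"
    using assms(1) unfolding ess_equiv_def by blast
  obtain \<tau> where \<tau>: "bij_betw \<tau> idx3 idx3"
    and BC: "(\<forall>i\<in>idx3. \<forall>j\<in>idx3. C i j = B (\<tau> i) (\<tau> j)) \<or>
      (\<forall>i\<in>idx3. \<forall>j\<in>idx3. C i j = - B (\<tau> i) (\<tau> j))"
    using assms(2) unfolding ess_equiv_def by blast
  have "\<tau> i \<in> idx3" if "i \<in> idx3" for i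
    using \<tau> that bij_betw_apply by metis
  then have "(\<forall>i\<in>idx3. \<forall>j\<in>idx3. C i j = A ((\<sigma> \<circ> \<tau>) i) ((\<sigma> \<circ> \<tau>) j)) \<or>
      (\<forall>i\<in>idx3. \<forall>j\<in>idx3. C i j = - A ((\<sigma> \<circ> \<tau>) i) ((\<sigma> \<circ> \<tau>) j))"
    using AB BC by auto
  then show ?thesis
    unfolding ess_equiv_def using bij_betw_trans[OF \<tau> \<sigma>] by blast
qed

lemma ess_equiv_skewm_rotate: "ess_equiv (skewm x y z) (skewm y z x)"
  unfolding ess_equiv_def
  by (intro exI[of _ "nth [0, 2, 3, 1]"] conjI disjI1)
    (auto simp: bij_betw_def inj_on_def idx3_def)

lemma ess_equiv_skewm_swap: "ess_equiv (skewm x y z) (skewm x z y)"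
  unfolding ess_equiv_def
  by (intro exI[of _ "nth [0, 2, 1, 3]"] conjI disjI2)
    (auto simp: bij_betw_def inj_on_def idx3_def)

lemma ess_equiv_skewm_neg: "ess_equiv (skewm x y z) (skewm (-x) (-y) (-z))"
  unfolding ess_equiv_def
  by (intro exI[of _ id] conjI disjI2) (auto simp: idx3_def)

lemma bij_betw_idx3_cases:
  assumes "bij_betw \<sigma> idx3 idx3"
  shows "(\<sigma> 1, \<sigma> 2, \<sigma> 3) \<in>
    {(1, 2, 3), (1, 3, 2), (2, 1, 3), (2, 3, 1), (3, 1, 2), (3, 2, 1)}"
proof -
  have "\<sigma> 1 \<in> {1, 2, 3}" "\<sigma> 2 \<in> {1, 2, 3}" "\<sigma> 3 \<in> {1, 2, 3}"
    using bij_betw_apply[OF assms] by (auto simp: idx3_def)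
  moreover have "\<sigma> 1 \<noteq> \<sigma> 2" "\<sigma> 2 \<noteq> \<sigma> 3" "\<sigma> 1 \<noteq> \<sigma> 3"
    using inj_onD[OF bij_betw_imp_inj_on[OF assms]] by (fastforce simp: idx3_def)+
  ultimately show ?thesis
    by (elim insertE emptyE) simp_all
qed

lemma markov_cyclic_permute:
  "markov_cyclic x y z \<longleftrightarrow> markov_cyclic y z x" "markov_cyclic x y z \<longleftrightarrow> markov_cyclic z x y"
  "markov_cyclic x y z \<longleftrightarrow> markov_cyclic x z y" "markov_cyclic x y z \<longleftrightarrow> markov_cyclic y x z"
  "markov_cyclic x y z \<longleftrightarrow> markov_cyclic z y x"
  using markov_cyclic_rotate markov_cyclic_swap by metis+

lemma markov_cyclic_ess_equiv:
  assumes "ess_equiv (skewm x y z) (skewm p q r)"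
  shows "markov_cyclic p q r \<longleftrightarrow> markov_cyclic x y z"
proof -
  obtain \<sigma> where \<sigma>: "bij_betw \<sigma> idx3 idx3"
    and signed: "(\<forall>i\<in>idx3. \<forall>j\<in>idx3. skewm p q r i j = skewm x y z (\<sigma> i) (\<sigma> j)) \<or>
      (\<forall>i\<in>idx3. \<forall>j\<in>idx3. skewm p q r i j = - skewm x y z (\<sigma> i) (\<sigma> j))"
    using assms unfolding ess_equiv_def by blast
  have idx: "1 \<in> idx3" "2 \<in> idx3" "3 \<in> idx3"
    by (simp_all add: idx3_def)
  have "\<exists>e :: int. (e = 1 \<or> e = -1) \<and>
      (\<forall>i\<in>idx3. \<forall>j\<in>idx3. skewm p q r i j = e * skewm x y z (\<sigma> i) (\<sigma> j))"
    using signed by (metis mult_1 mult_minus1)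
  then obtain e :: int where e: "e = 1 \<or> e = -1"
    and entries: "\<forall>i\<in>idx3. \<forall>j\<in>idx3. skewm p q r i j = e * skewm x y z (\<sigma> i) (\<sigma> j)"
    by blast
  have pqr: "p = e * skewm x y z (\<sigma> 1) (\<sigma> 2)" "q = e * skewm x y z (\<sigma> 2) (\<sigma> 3)"
    "r = e * skewm x y z (\<sigma> 3) (\<sigma> 1)"
    using entries[rule_format, OF idx(1) idx(2)] entries[rule_format, OF idx(2) idx(3)]
      entries[rule_format, OF idx(3) idx(1)] by simp_all
  from e show ?thesis
    using bij_betw_idx3_cases[OF \<sigma>] pqr markov_cyclic_permute markov_cyclic_neg by auto
qed

lemma ess_equiv_skewm_sorted:
  obtains p q r
  where "ess_equiv (skewm x y z) (skewm p q r)" "\<bar>p\<bar> \<ge> \<bar>q\<bar>" "\<bar>q\<bar> \<ge> \<bar>r\<bar>" "r \<ge> 0"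
proof -
  have rotate2: "ess_equiv (skewm x y z) (skewm z x y)"
    by (rule ess_equiv_trans[OF ess_equiv_skewm_rotate ess_equiv_skewm_rotate])
  have perms: "ess_equiv (skewm x y z) (skewm x y z)" "ess_equiv (skewm x y z) (skewm y z x)"
    "ess_equiv (skewm x y z) (skewm z x y)" "ess_equiv (skewm x y z) (skewm x z y)"
    "ess_equiv (skewm x y z) (skewm y x z)" "ess_equiv (skewm x y z) (skewm z y x)"
    by (rule ess_equiv_refl ess_equiv_skewm_rotate rotate2 ess_equiv_skewm_swap
        ess_equiv_trans[OF ess_equiv_skewm_rotate ess_equiv_skewm_swap]
        ess_equiv_trans[OF rotate2 ess_equiv_skewm_swap])+
  obtain p q r
    where pqr: "ess_equiv (skewm x y z) (skewm p q r)" "\<bar>p\<bar> \<ge> \<bar>q\<bar>" "\<bar>q\<bar> \<ge> \<bar>r\<bar>"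
  proof -
    consider "\<bar>x\<bar> \<ge> \<bar>y\<bar>" "\<bar>y\<bar> \<ge> \<bar>z\<bar>" | "\<bar>y\<bar> \<ge> \<bar>z\<bar>" "\<bar>z\<bar> \<ge> \<bar>x\<bar>"
      | "\<bar>z\<bar> \<ge> \<bar>x\<bar>" "\<bar>x\<bar> \<ge> \<bar>y\<bar>" | "\<bar>x\<bar> \<ge> \<bar>z\<bar>" "\<bar>z\<bar> \<ge> \<bar>y\<bar>"
      | "\<bar>y\<bar> \<ge> \<bar>x\<bar>" "\<bar>x\<bar> \<ge> \<bar>z\<bar>" | "\<bar>z\<bar> \<ge> \<bar>y\<bar>" "\<bar>y\<bar> \<ge> \<bar>x\<bar>"
      by linarith
    then show ?thesis
    proof cases
      case 1 show ?thesis by (rule that[OF perms(1)]) (use 1 in auto)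
    next
      case 2 show ?thesis by (rule that[OF perms(2)]) (use 2 in auto)
    next
      case 3 show ?thesis by (rule that[OF perms(3)]) (use 3 in auto)
    next
      case 4 show ?thesis by (rule that[OF perms(4)]) (use 4 in auto)
    next
      case 5 show ?thesis by (rule that[OF perms(5)]) (use 5 in auto)
    next
      case 6 show ?thesis by (rule that[OF perms(6)]) (use 6 in auto)
    qed
  qed
  show ?thesis
  proof (cases "r \<ge> 0")
    case True
    then show ?thesis
      using that pqr by blast
  next
    case False
    show ?thesis
      by (rule that[OF ess_equiv_trans[OF pqr(1) ess_equiv_skewm_neg]]) (use pqr False in auto)
  qed
qed

lemma form_eq_skewm:
  "form t a b c = (if t = 0 then skewm a b c else if t = 1 then skewm a (-b) c
     else if t = 2 then skewm (-a) b c else skewm (-a) (-b) c)"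
  by (induction t a b c rule: form.induct) (simp_all add: skewm_def)

lemma skewm_eq_form:
  assumes "r \<ge> 0"
  obtains t where "t < 4" "skewm p q r = form t \<bar>p\<bar> \<bar>q\<bar> r"
proof -
  consider "p \<ge> 0" "q \<ge> 0" | "p \<ge> 0" "q < 0" | "p < 0" "q \<ge> 0" | "p < 0" "q < 0"
    by linarith
  then show ?thesis
  proof cases
    case 1 then show ?thesis using that[of 0] by (simp add: form_eq_skewm)
  next
    case 2 then show ?thesis using that[of 1] by (simp add: form_eq_skewm)
  next
    case 3 then show ?thesis using that[of 2] by (simp add: form_eq_skewm)
  next
    case 4 then show ?thesis using that[of 3] by (simp add: form_eq_skewm)
  qed
qed

lemma std_form_spec:
  assumes "skew3 A"
  obtains t a b c where "a \<ge> b" "b \<ge> c" "c \<ge> 0" "std_form A = form t a b c"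
    "ess_equiv A (std_form A)"
proof -
  obtain p q r where pqr: "ess_equiv A (skewm p q r)" "\<bar>p\<bar> \<ge> \<bar>q\<bar>" "\<bar>q\<bar> \<ge> \<bar>r\<bar>" "r \<ge> 0"
    using ess_equiv_skewm_sorted[of "A 1 2" "A 2 3" "A 3 1"] skew3_eq_skewm[OF assms] by metis
  obtain t where t: "t < 4" "skewm p q r = form t \<bar>p\<bar> \<bar>q\<bar> r"
    using skewm_eq_form[OF pqr(4)] by blast
  have "has_form A t"
    unfolding has_form_def using pqr t
    by (intro exI[of _ "\<bar>p\<bar>"] exI[of _ "\<bar>q\<bar>"] exI[of _ r]) auto
  then obtain t0 where t0: "has_form A t0" "\<forall>t'<t0. \<not> has_form A t'"
    using exists_least_iff[of "has_form A"] by blast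
  then have "t0 < 4"
    using \<open>has_form A t\<close> t(1) leI order.strict_trans1 by blast
  obtain a b c where "a \<ge> b" "b \<ge> c" "c \<ge> 0" "ess_equiv A (form t0 a b c)"
    using t0(1) unfolding has_form_def by blast
  then have "\<exists>M. \<exists>t a b c. t < 4 \<and> a \<ge> b \<and> b \<ge> c \<and> c \<ge> 0 \<and>
      M = form t a b c \<and> ess_equiv A M \<and> (\<forall>t'<t. \<not> has_form A t')"
    using t0(2) \<open>t0 < 4\<close> by blast
  from someI_ex[OF this] show ?thesis
    using that unfolding std_form_def by blast
qed

lemma std_form_skewm:
  assumes "skew3 A"
  obtains p q r where "std_form A = skewm p q r" "ess_equiv A (skewm p q r)"
    "cyclic_triple p q r \<Longrightarrow> p \<ge> q \<and> q \<ge> r \<and> r > 0"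
proof -
  obtain t a b c where abc: "a \<ge> b" "b \<ge> c" "c \<ge> 0" and std: "std_form A = form t a b c"
    and equiv: "ess_equiv A (std_form A)"
    by (rule std_form_spec[OF assms])
  consider "t = 0" | "t = 1" | "t = 2" | "t \<ge> 3"
    by fastforce
  then show ?thesis
  proof cases
    case 1
    show ?thesis
      by (rule that[of a b c])
        (use 1 std equiv abc in \<open>simp_all add: form_eq_skewm cyclic_triple_def\<close>)
  next
    case 2
    show ?thesis
      by (rule that[of a "-b" c])
        (use 2 std equiv abc in \<open>simp_all add: form_eq_skewm cyclic_triple_def\<close>)
  next
    case 3
    show ?thesis
      by (rule that[of "-a" b c])
        (use 3 std equiv abc in \<open>simp_all add: form_eq_skewm cyclic_triple_def\<close>)
  next
    case 4
    show ?thesis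
      by (rule that[of "-a" "-b" c])
        (use 4 std equiv abc in \<open>simp_all add: form_eq_skewm cyclic_triple_def\<close>)
  qed
qed

lemma markov_cyclic_if_sorted:
  assumes "d \<ge> e" "e \<ge> f" "f \<ge> 2" "e * f - d \<ge> e"
  shows "markov_cyclic d e f"
  using markov_le_4_if_sorted[OF assms] assms by (simp add: markov_cyclic_pos_iff)

lemma markov_third_2_le_4_imp_eq:
  assumes "markov d e 2 \<le> 4"
  shows "d = e"
proof -
  have "markov d e 2 = (d - e) * (d - e) + 4"
    by (simp add: markov_def algebra_simps)
  with assms have "(d - e) * (d - e) = 0"
    using zero_le_square[of "d - e"] by linarith
  then show ?thesis
    by simp
qed

lemma markov_cyclic_mu3_iff:
  "markov_cyclic (x - sgn z * max (y * z) 0) (-y) (-z) \<longleftrightarrow> markov_cyclic x y z"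
proof
  assume "markov_cyclic (x - sgn z * max (y * z) 0) (-y) (-z)"
  from markov_cyclic_mu3[OF this] show "markov_cyclic x y z"
    by simp
qed (rule markov_cyclic_mu3)

lemma step2_passes_sound:
  "step2_passes M \<Longrightarrow> skew3 M \<Longrightarrow> markov_cyclic (M 1 2) (M 2 3) (M 3 1)"
proof (induction rule: step2_passes.induct)
  case (1 d e f M)
  have "e * f - d \<ge> e \<or> markov_cyclic d e f"
    using "1.IH" skew3_skewm[of d e f] unfolding skewm_def by (auto simp: S_def)
  then have "markov_cyclic d e f"
    using markov_cyclic_if_sorted "1.hyps"(1-3) by blast
  moreover have "ess_equiv (mu 3 (skewm (M 1 2) (M 2 3) (M 3 1))) (skewm d e f)"
    using "1.hyps"(4) skew3_eq_skewm[OF "1.prems"] unfolding skewm_def[of d e f] by metis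
  ultimately show ?case
    unfolding mu_skewm using markov_cyclic_ess_equiv markov_cyclic_mu3_iff by blast
qed

lemma step2_passes_intro:
  assumes sorted: "d \<ge> e" "e \<ge> f" "f \<ge> 2" and equiv: "ess_equiv (mu 3 M) (skewm d e f)"
    and markov: "markov_cyclic d e f"
    and continue: "f \<ge> 3 \<Longrightarrow> e * f - d < e \<Longrightarrow> step2_passes (skewm d e f)"
  shows "step2_passes M"
proof (rule step2_passes.intros[of e d f])
  show "e \<le> d" "f \<le> e" "2 \<le> f"
    using sorted by simp_all
  show "ess_equiv (mu 3 M) (S (- d) (- e) f)"
    using equiv by (simp add: skewm_def)
  consider "f = 2" | "f \<ge> 3"
    using sorted by linarith
  then show "3 \<le> f \<and> e \<le> e * f - d \<or> f = 2 \<and> d = e \<or>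
      3 \<le> f \<and> e * f - d < e \<and> step2_passes (S (- d) (- e) f)"
  proof cases
    case 1
    then have "d = e"
      using markov sorted markov_third_2_le_4_imp_eq by (auto simp: markov_cyclic_pos_iff)
    with 1 show ?thesis
      by simp
  next
    case 2
    then show ?thesis
      using continue by (auto simp: skewm_def)
  qed
qed

lemma step2_passes_complete:
  "a \<ge> b \<Longrightarrow> b \<ge> c \<Longrightarrow> c \<ge> 2 \<Longrightarrow> markov_cyclic a b c \<Longrightarrow> b * c - a < b \<Longrightarrow>
    step2_passes (skewm a b c)"
proof (induction "nat (a + b + c)" arbitrary: a b c rule: less_induct)
  case less
  define a' where "a' = b * c - a"
  have "a' \<ge> 2" "a' < b"
    using vieta_ge_2[of a b c] less.prems by (simp_all add: a'_def markov_cyclic_pos_iff)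
  have markov': "markov_cyclic b c a'"
    using markov_cyclic_vieta[of a b c] less.prems markov_cyclic_rotate by (simp add: a'_def)
  have "mu 3 (skewm a b c) = skewm (-a') (-b) (-c)"
    using less.prems by (simp add: mu_skewm a'_def)
  then have equiv: "ess_equiv (mu 3 (skewm a b c)) (skewm b c a')"
    using ess_equiv_trans[OF ess_equiv_skewm_neg[of "-a'" "-b" "-c"] ess_equiv_skewm_rotate] by simp
  have IH: "step2_passes (skewm d e f)"
    if "d \<ge> e" "e \<ge> f" "f \<ge> 2" "markov_cyclic d e f" "e * f - d < e" "d + e + f < a + b + c"
    for d e f
    using less.hyps[of d e f] that by simp
  show ?case
  proof (cases "a' \<ge> c")
    case True
    show ?thesis
    proof (rule step2_passes_intro)
      show "ess_equiv (mu 3 (skewm a b c)) (skewm b a' c)"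
        using ess_equiv_trans[OF equiv ess_equiv_skewm_swap] .
      show "markov_cyclic b a' c"
        using markov' markov_cyclic_swap by blast
    qed (use True \<open>a' < b\<close> less.prems IH markov' markov_cyclic_swap in auto)
  next
    case False
    show ?thesis
      by (rule step2_passes_intro[OF _ _ _ equiv markov'])
        (use False \<open>a' \<ge> 2\<close> \<open>a' < b\<close> less.prems IH markov' in auto)
  qed
qed

lemma passes_iff_markov_cyclic:
  assumes "skew3 A"
  shows "passes A \<longleftrightarrow> markov_cyclic (A 1 2) (A 2 3) (A 3 1)"
proof -
  obtain p q r where std: "std_form A = skewm p q r" and equiv: "ess_equiv A (skewm p q r)"
    and sorted: "cyclic_triple p q r \<Longrightarrow> p \<ge> q \<and> q \<ge> r \<and> r > 0"
    using std_form_skewm[OF assms] by blast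
  have markov_std: "markov_cyclic (A 1 2) (A 2 3) (A 3 1) \<longleftrightarrow> markov_cyclic p q r"
    using markov_cyclic_ess_equiv equiv skew3_eq_skewm[OF assms] by metis
  have passes: "passes A \<longleftrightarrow> (p \<ge> q \<and> q \<ge> r \<and> r \<ge> 2 \<and> q * r - p \<ge> q) \<or>
      (cyclic_triple p q r \<and> \<not> r \<le> 2 \<and> step2_passes (skewm p q r))"
    unfolding passes_def Let_def std skewm_apply no_sign_coherent_col_skewm_iff ..
  have "passes A \<longleftrightarrow> markov_cyclic p q r"
  proof
    assume "passes A"
    then have "(p \<ge> q \<and> q \<ge> r \<and> r \<ge> 2 \<and> q * r - p \<ge> q) \<or> step2_passes (skewm p q r)"
      by (auto simp: passes)
    then show "markov_cyclic p q r"
      using markov_cyclic_if_sorted step2_passes_sound[OF _ skew3_skewm] by fastforce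
  next
    assume markov: "markov_cyclic p q r"
    then have "p \<ge> q" "q \<ge> r" "r \<ge> 2" "cyclic_triple p q r"
      using sorted by (auto simp: markov_cyclic_def)
    show "passes A"
    proof (cases "q * r - p \<ge> q")
      case True
      then show ?thesis
        using \<open>p \<ge> q\<close> \<open>q \<ge> r\<close> \<open>r \<ge> 2\<close> by (simp add: passes)
    next
      case False
      have "r \<noteq> 2"
        using False markov \<open>p \<ge> q\<close> \<open>q \<ge> r\<close> markov_third_2_le_4_imp_eq[of p q]
        by (auto simp: markov_cyclic_pos_iff)
      moreover have "step2_passes (skewm p q r)"
        using False markov \<open>p \<ge> q\<close> \<open>q \<ge> r\<close> \<open>r \<ge> 2\<close> by (intro step2_passes_complete) auto
      ultimately show ?thesis
        using \<open>cyclic_triple p q r\<close> \<open>r \<ge> 2\<close> by (simp add: passes)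
    qed
  qed
  with markov_std show ?thesis
    by simp
qed

theorem mainTheorem8:
  fixes A :: mat3
  assumes "skew3 A"
  shows "passes A \<longleftrightarrow> mutation_cyclic A"
  using passes_iff_markov_cyclic[OF assms] mutation_cyclic_skewm_iff skew3_eq_skewm[OF assms]
  by metis

end
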